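(* For each integer $q$ there exists a subset $\mathscr{N}_q\subset\{2,3,\dots,q-1\}$ such that, as $q\to\infty$, $$\#\mathscr{N}_q=q+O\!\left(\frac{q}{\log_2 q}\right),$$ where the implied constant is less than $1$, and, provided $k=k(q)$ is a positive integer satisfying $k=o(\sqrt{\log_2 q})$, $$\#\{\mathscr{S}\in\mathscr{N}_q^{[k]}:\ \mathscr{S}\text{ is multiplicatively independent}\}=\binom{\#\mathscr{N}_q}{k}+O\big((\#\mathscr{N}_q)^{k-3/2+o(1)}\big)=\frac{q^k}{k!}+O\!\left(\frac{q^k}{(k-1)!\,\log_2 q}\right).$$
   Context: For a set $\mathscr{A}$ and $k\in\mathbb{N}$, $\mathscr{A}^{[k]}$ denotes the set of $k$-element subsets of $\mathscr{A}$. Positive integers $n_1,\dots,n_r$ are multiplicatively independent if $\alpha_1=\dots=\alpha_r=0$ is the only integer solution of $n_1^{\alpha_1}\cdots n_r^{\alpha_r}=1$; a set is multiplicatively independent if its elements are. $\log x:=\max\{\ln x,2\}$ and $\log_2 x=\log\log x$. *)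

theory Defs
  imports Complex_Main "HOL-Library.Landau_Symbols"
begin

text \<open>The paper's truncated logarithm: log x = max (ln x) 2, and log_2 x = log (log x).\<close>
definition Log :: "real \<Rightarrow> real" where
  "Log x = max (ln x) 2"

definition Log2 :: "real \<Rightarrow> real" where
  "Log2 x = Log (Log x)"

definition mult_indep :: "nat set \<Rightarrow> bool" where
  "mult_indep S \<longleftrightarrow>
     (\<forall>\<alpha> :: nat \<Rightarrow> int. (\<Prod>n\<in>S. (real n) powi (\<alpha> n)) = 1 \<longrightarrow> (\<forall>n\<in>S. \<alpha> n = 0))"

end

theory Submission
  imports Defs "HOL-Computational_Algebra.Squarefree" "HOL-Computational_Algebra.Nth_Powers"
    "HOL-Analysis.Harmonic_Numbers" "HOL-Real_Asymp.Real_Asymp"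
begin

text \<open>Take \<open>N q = {2..<q}\<close>. A multiplicatively dependent set \<open>S\<close> contains a nonempty \<open>T\<close> carrying
  a relation \<open>\<Prod>n\<in>P. n ^ x n = \<Prod>n\<in>Q. n ^ y n\<close> with \<open>T\<close> the disjoint union of \<open>P\<close> and \<open>Q\<close>, so
  every prime dividing an element of \<open>T\<close> divides a second one. Hence \<open>\<Prod>T\<close> is powerful,
  \<open>\<Prod>T = v * s\<^sup>2\<close> with \<open>v dvd s\<close>, and \<open>T\<close> is a \<open>t\<close>-set of divisors of \<open>v * s\<^sup>2 \<le> q ^ t\<close>. The
  divisor bound \<open>d(n) \<le> n powr \<delta> * (2/\<delta>) powr (2 powr (1/\<delta>) + 1)\<close> with \<open>\<delta> \<approx> 1 / ln (ln q)\<close>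
  leaves at most \<open>q powr (t/2 + o(1))\<close> such \<open>T\<close> for \<open>t \<ge> 3\<close>; for \<open>t = 2\<close> one has
  \<open>T = {c ^ i, c ^ j}\<close> with \<open>c\<^sup>2 < q\<close>, at most \<open>sqrt q * (log 2 q)\<^sup>2\<close> sets. Each \<open>T\<close> lies in at
  most \<open>q ^ (k - t)\<close> of the \<open>k\<close>-sets, so at most \<open>q powr (k - 3/2 + o(1))\<close> of the
  \<open>(q - 2) choose k\<close> of them are dependent, and \<open>(q - 2) choose k = q ^ k / fact k * (1 + O(k\<^sup>2/q))\<close>.\<close>

definition divisor_count :: "nat \<Rightarrow> nat" where
  "divisor_count n = card {d. d dvd n}"

definition divisor_bound :: "real \<Rightarrow> real \<Rightarrow> real" where
  "divisor_bound \<delta> x = x powr \<delta> * (2/\<delta>) powr (2 powr (1/\<delta>) + 1)"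

lemma divisor_count_prime_power_mult_le:
  assumes p: "prime p" and m: "m > 0"
  shows "divisor_count (p ^ e * m) \<le> Suc e * divisor_count m"
proof -
  have "{d. d dvd p ^ e * m} \<subseteq> (\<lambda>(i, d). p ^ i * d) ` ({..e} \<times> {d. d dvd m})"
  proof
    fix D assume "D \<in> {d. d dvd p ^ e * m}"
    then obtain a b where ab: "D = a * b" "a dvd p ^ e" "b dvd m"
      using division_decomp by blast
    then obtain i where "i \<le> e" "a = p ^ i" using divides_primepow_nat[OF p] by auto
    thus "D \<in> (\<lambda>(i, d). p ^ i * d) ` ({..e} \<times> {d. d dvd m})" using ab by force
  qed
  hence "divisor_count (p ^ e * m) \<le> card ((\<lambda>(i, d). p ^ i * d) ` ({..e} \<times> {d. d dvd m}))"
    unfolding divisor_count_def using m by (intro card_mono finite_imageI) auto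
  also have "\<dots> \<le> card ({..e} \<times> {d. d dvd m})" by (rule card_image_le) (use m in auto)
  also have "\<dots> = Suc e * divisor_count m" by (simp add: divisor_count_def card_cartesian_product)
  finally show ?thesis .
qed

lemma Suc_le_powr_exponent:
  fixes x \<delta> :: real
  assumes \<delta>: "0 < \<delta>" "\<delta> \<le> 1" and x: "x \<ge> 2"
  shows "real (Suc e) \<le> (if x < 2 powr (1/\<delta>) then 2/\<delta> else 1) * x powr (real e * \<delta>)"
proof (cases "x < 2 powr (1/\<delta>)")
  case True
  have "1 + real e * \<delta> / 2 \<le> 1 + real e * \<delta> * ln 2"
    using mult_left_mono[of "1/2" "ln 2" "real e * \<delta>"] ln2_ge_two_thirds \<delta> by simp
  also have "\<dots> \<le> exp (real e * \<delta> * ln 2)" by (rule exp_ge_add_one_self)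
  also have "\<dots> = 2 powr (real e * \<delta>)" by (simp add: powr_def)
  also have "\<dots> \<le> x powr (real e * \<delta>)" using \<delta> x by (intro powr_mono2) auto
  finally have "2/\<delta> * (1 + real e * \<delta> / 2) \<le> 2/\<delta> * x powr (real e * \<delta>)"
    using \<delta> by (intro mult_left_mono) auto
  hence "2/\<delta> + real e \<le> 2/\<delta> * x powr (real e * \<delta>)"
    using \<delta> by (simp add: field_simps)
  moreover have "1 \<le> 2/\<delta>" using \<delta> by simp
  ultimately show ?thesis using True by simp
next
  case False
  have "(2::real) = (2 powr (1/\<delta>)) powr \<delta>" using \<delta> by (simp add: powr_powr)
  also have "\<dots> \<le> x powr \<delta>" using False \<delta> by (intro powr_mono2) auto
  finally have "2 ^ e \<le> (x powr \<delta>) ^ e" by (intro power_mono) auto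
  also have "(x powr \<delta>) ^ e = x powr (real e * \<delta>)"
    using x by (simp add: powr_realpow[symmetric] powr_powr mult.commute)
  finally have "2 ^ e \<le> x powr (real e * \<delta>)" .
  moreover have "real (Suc e) \<le> real (2 ^ e)" using less_exp[of e] by (simp only: of_nat_le_iff Suc_le_eq)
  ultimately show ?thesis using False by simp
qed

lemma prime_power_mult_decompose:
  fixes n :: nat
  assumes "n > 1"
  obtains p e m where "prime p" "p dvd n" "e > 0" "m > 0" "m < n" "n = p ^ e * m" "\<not> p dvd m"
proof -
  obtain p where p: "prime p" "p dvd n" using prime_factor_nat[of n] assms by auto
  define e where "e = multiplicity p n"
  have "n \<noteq> 0" "\<not> is_unit p" using assms p(1) not_prime_unit by auto
  then obtain m where nm: "n = p ^ e * m" "\<not> p dvd m" unfolding e_def by (rule multiplicity_decompose')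
  have "e > 0" using nm p(2) by (cases e) auto
  have "m > 0" using nm assms by (cases m) auto
  have "p ^ 1 \<le> p ^ e" using prime_gt_0_nat[OF p(1)] \<open>e > 0\<close> by (intro power_increasing) auto
  hence "m < n" using nm(1) prime_ge_2_nat[OF p(1)] \<open>m > 0\<close> by simp
  with that p \<open>e > 0\<close> \<open>m > 0\<close> nm show ?thesis by blast
qed

lemma divisor_count_le_powr_small_primes:
  assumes \<delta>: "0 < \<delta>" "\<delta> \<le> 1" and "n > 0"
  shows "real (divisor_count n)
           \<le> real n powr \<delta> * (2/\<delta>) ^ card {p. prime p \<and> p dvd n \<and> real p < 2 powr (1/\<delta>)}"
  using \<open>n > 0\<close>
proof (induction n rule: less_induct)
  case (less n)
  define B where "B = (2::real) powr (1/\<delta>)"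
  define small where "small n = {p. prime p \<and> p dvd n \<and> real p < B}" for n
  show ?case
  proof (cases "n = 1")
    case True
    have "small n = {}" using True by (auto simp: small_def)
    thus ?thesis using True unfolding B_def[symmetric] small_def[symmetric]
      by (simp add: divisor_count_def)
  next
    case False
    with less.prems have "n > 1" by simp
    then obtain p e m where p: "prime p" "p dvd n" and "e > 0" "m > 0" "m < n"
      and nm: "n = p ^ e * m" "\<not> p dvd m"
      by (rule prime_power_mult_decompose)
    have "p \<ge> 2" using p by (simp add: prime_ge_2_nat)
    define F where "F = (if real p < B then 2/\<delta> else 1)"
    have F: "F \<ge> 0" using \<delta> by (simp add: F_def)
    have small_n: "small n = (if real p < B then insert p (small m) else small m)"
    proof -
      have "\<And>r. prime r \<Longrightarrow> r dvd n \<longleftrightarrow> r = p \<or> r dvd m"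
        using nm p \<open>e > 0\<close> by (auto simp: prime_dvd_mult_iff prime_dvd_power_iff primes_dvd_imp_eq)
      thus ?thesis unfolding small_def using p by auto
    qed
    have "finite (small m)" unfolding small_def using \<open>m > 0\<close>
      by (intro finite_subset[OF _ finite_atMost[of m]]) (auto dest: dvd_imp_le)
    moreover have "p \<notin> small m" using nm by (simp add: small_def)
    ultimately have card_small: "(2/\<delta>) ^ card (small n) = F * (2/\<delta>) ^ card (small m)"
      by (simp add: small_n F_def)
    have n_powr: "real n powr \<delta> = real p powr (real e * \<delta>) * real m powr \<delta>"
      using nm \<open>p \<ge> 2\<close> by (simp add: powr_mult powr_realpow[symmetric] powr_powr)
    have "real (divisor_count n) \<le> real (Suc e) * real (divisor_count m)"
      using divisor_count_prime_power_mult_le[OF p(1) \<open>m > 0\<close>, of e] nm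
      by (metis of_nat_le_iff of_nat_mult)
    also have "\<dots> \<le> (F * real p powr (real e * \<delta>)) * (real m powr \<delta> * (2/\<delta>) ^ card (small m))"
      using Suc_le_powr_exponent[OF \<delta>, of p e] less.IH[OF \<open>m < n\<close> \<open>m > 0\<close>] \<open>p \<ge> 2\<close> F \<delta>
      by (intro mult_mono) (auto simp: F_def B_def small_def)
    also have "\<dots> = real n powr \<delta> * (2/\<delta>) ^ card (small n)"
      by (simp add: n_powr card_small)
    finally show ?thesis by (simp add: small_def B_def)
  qed
qed

lemma divisor_count_le_divisor_bound:
  assumes \<delta>: "0 < \<delta>" "\<delta> \<le> 1" and n: "n > 0"
  shows "real (divisor_count n) \<le> divisor_bound \<delta> (real n)"
proof -
  define B where "B = (2::real) powr (1/\<delta>)"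
  define small where "small = {p. prime p \<and> p dvd n \<and> real p < B}"
  have "small \<subseteq> {..<nat \<lceil>B\<rceil>}" by (auto simp: small_def) linarith
  hence "card small \<le> nat \<lceil>B\<rceil>" by (metis card_lessThan card_mono finite_lessThan)
  hence "real (card small) \<le> real (nat \<lceil>B\<rceil>)" by (rule of_nat_mono)
  also have "\<dots> \<le> B + 1"
    using of_int_ceiling_le_add_one[of B] by (simp add: B_def)
  finally have card: "real (card small) \<le> B + 1" .
  have "1 \<le> 2/\<delta>" using \<delta> by simp
  hence "(2/\<delta>) ^ card small \<le> (2/\<delta>) powr (B + 1)"
    using card \<delta> by (subst powr_realpow[symmetric]) (auto intro: powr_mono)
  hence "real n powr \<delta> * (2/\<delta>) ^ card small \<le> real n powr \<delta> * (2/\<delta>) powr (B + 1)"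
    by (intro mult_left_mono) auto
  with divisor_count_le_powr_small_primes[OF \<delta> n] show ?thesis
    by (simp add: divisor_bound_def B_def small_def)
qed

lemma divisor_bound_nonneg [simp]: "0 \<le> divisor_bound \<delta> x"
  by (simp add: divisor_bound_def)

lemma divisor_bound_mono:
  "0 < \<delta> \<Longrightarrow> 0 \<le> x \<Longrightarrow> x \<le> y \<Longrightarrow> divisor_bound \<delta> x \<le> divisor_bound \<delta> y"
  unfolding divisor_bound_def by (intro mult_right_mono powr_mono2) auto

lemma divisor_bound_ge_one:
  assumes "0 < \<delta>" "\<delta> \<le> 1" "1 \<le> x"
  shows "1 \<le> divisor_bound \<delta> x"
proof -
  have "1 \<le> x powr \<delta>" "1 \<le> (2/\<delta>) powr (2 powr (1/\<delta>) + 1)"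
    using assms by (auto intro!: ge_one_powr_ge_zero)
  thus ?thesis unfolding divisor_bound_def by (metis mult_mono' mult_1 zero_le_one)
qed

corollary divisor_count_le_divisor_bound_of_le:
  assumes "0 < \<delta>" "\<delta> \<le> 1" "0 < m" "m \<le> N"
  shows "real (divisor_count m) \<le> divisor_bound \<delta> (real N)"
  using divisor_count_le_divisor_bound[OF assms(1-3)] divisor_bound_mono[OF assms(1), of "real m" "real N"]
    assms(4) by simp

text \<open>\<open>T\<close> carries a multiplicative relation in which every element has a nonzero exponent,
  with the positive exponents on the left and the negated negative ones on the right.\<close>
definition power_relation :: "nat set \<Rightarrow> bool" where
  "power_relation T \<longleftrightarrow> (\<exists>P Q x y. P \<inter> Q = {} \<and> P \<union> Q = T \<and>
     (\<forall>n\<in>P. x n > (0::nat)) \<and> (\<forall>n\<in>Q. y n > (0::nat)) \<and> (\<Prod>n\<in>P. n ^ x n) = (\<Prod>n\<in>Q. n ^ y n))"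

definition primes_shared :: "nat set \<Rightarrow> bool" where
  "primes_shared T \<longleftrightarrow> (\<forall>n\<in>T. \<forall>p. prime p \<longrightarrow> p dvd n \<longrightarrow> (\<exists>m\<in>T. m \<noteq> n \<and> p dvd m))"

lemma not_mult_indep_imp_power_relation:
  assumes S: "finite S" and "\<not> mult_indep S"
  shows "\<exists>T \<subseteq> S. T \<noteq> {} \<and> power_relation T"
proof -
  obtain \<alpha> :: "nat \<Rightarrow> int" where \<alpha>: "(\<Prod>n\<in>S. real n powi \<alpha> n) = 1" and "\<exists>n\<in>S. \<alpha> n \<noteq> 0"
    using assms(2) unfolding mult_indep_def by auto
  define P where "P = {n\<in>S. \<alpha> n > 0}"
  define Q where "Q = {n\<in>S. \<alpha> n < 0}"
  have fin: "finite P" "finite Q" using S by (auto simp: P_def Q_def)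
  have disj: "P \<inter> Q = {}" by (auto simp: P_def Q_def)
  have zero: "\<alpha> n = 0" if "n \<in> S - (P \<union> Q)" for n using that unfolding P_def Q_def by auto
  have "1 = (\<Prod>n\<in>P \<union> Q. real n powi \<alpha> n)"
    unfolding \<alpha>[symmetric] using S
    by (intro prod.mono_neutral_right) (auto simp: zero, auto simp: P_def Q_def)
  also have "\<dots> = (\<Prod>n\<in>P. real n powi \<alpha> n) * (\<Prod>n\<in>Q. real n powi \<alpha> n)"
    by (rule prod.union_disjoint[OF fin disj])
  also have "(\<Prod>n\<in>P. real n powi \<alpha> n) = real (\<Prod>n\<in>P. n ^ nat (\<alpha> n))"
    by (simp add: P_def power_int_def)
  also have "(\<Prod>n\<in>Q. real n powi \<alpha> n) = inverse (real (\<Prod>n\<in>Q. n ^ nat (- \<alpha> n)))"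
    by (simp add: Q_def power_int_def power_inverse prod_inversef[symmetric])
  finally have "real (\<Prod>n\<in>P. n ^ nat (\<alpha> n)) / real (\<Prod>n\<in>Q. n ^ nat (- \<alpha> n)) = 1"
    by (simp add: divide_inverse)
  hence "(\<Prod>n\<in>P. n ^ nat (\<alpha> n)) = (\<Prod>n\<in>Q. n ^ nat (- \<alpha> n))"
    by (simp only: divide_eq_1_iff of_nat_eq_iff)
  hence "power_relation (P \<union> Q)"
    unfolding power_relation_def using disj
    by (intro exI[of _ P] exI[of _ Q] exI[of _ "\<lambda>n. nat (\<alpha> n)"] exI[of _ "\<lambda>n. nat (- \<alpha> n)"])
       (auto simp: P_def Q_def)
  moreover have "P \<union> Q \<subseteq> S" by (auto simp: P_def Q_def)
  moreover have "P \<union> Q \<noteq> {}"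
  proof -
    obtain n where "n \<in> S" "\<alpha> n \<noteq> 0" using \<open>\<exists>n\<in>S. \<alpha> n \<noteq> 0\<close> ..
    hence "n \<in> P \<union> Q" unfolding P_def Q_def by (cases "\<alpha> n > 0") auto
    thus ?thesis by blast
  qed
  ultimately show ?thesis by (intro exI[of _ "P \<union> Q"]) simp
qed

lemma prime_dvd_prod_powers_imp_dvd_factor:
  fixes P Q :: "nat set"
  assumes fin: "finite P" "finite Q" and eq: "(\<Prod>n\<in>P. n ^ x n) = (\<Prod>n\<in>Q. n ^ y n)"
    and n: "n \<in> P" "x n > 0" and p: "prime p" "p dvd n"
  shows "\<exists>m\<in>Q. p dvd m"
proof -
  have "n dvd n ^ x n" using n(2) by simp
  with p(2) have "p dvd n ^ x n" by (rule dvd_trans)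
  also have "\<dots> dvd (\<Prod>n\<in>Q. n ^ y n)" unfolding eq[symmetric] using fin(1) n(1) by (rule dvd_prodI)
  finally obtain m where "m \<in> Q" "p dvd m ^ y m" using prime_dvd_prod_iff[OF fin(2) p(1)] by auto
  thus ?thesis using p(1) prime_dvd_power by blast
qed

lemma power_relation_imp_primes_shared:
  assumes "finite T" "power_relation T"
  shows "primes_shared T"
  unfolding primes_shared_def
proof (intro ballI allI impI)
  fix n p assume n: "n \<in> T" and p: "prime p" "p dvd n"
  obtain P Q x y where R: "P \<inter> Q = {}" "P \<union> Q = T" "\<forall>n\<in>P. x n > (0::nat)"
      "\<forall>n\<in>Q. y n > (0::nat)" "(\<Prod>n\<in>P. n ^ x n) = (\<Prod>n\<in>Q. n ^ y n)"
    using assms(2) unfolding power_relation_def by blast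
  have fin: "finite P" "finite Q" using assms(1) R(2) finite_Un[of P Q] by simp_all
  from n R(2) consider "n \<in> P" | "n \<in> Q" by blast
  then obtain m where "m \<in> T" "m \<noteq> n" "p dvd m"
  proof cases
    case 1
    then obtain m where "m \<in> Q" "p dvd m"
      using prime_dvd_prod_powers_imp_dvd_factor[OF fin R(5)] R(3) p by blast
    thus ?thesis using that R(1,2) 1 by blast
  next
    case 2
    then obtain m where "m \<in> P" "p dvd m"
      using prime_dvd_prod_powers_imp_dvd_factor[OF fin(2,1) R(5)[symmetric]] R(4) p by blast
    thus ?thesis using that R(1,2) 2 by blast
  qed
  thus "\<exists>m\<in>T. m \<noteq> n \<and> p dvd m" by blast
qed

lemma power_relation_pair:
  assumes "power_relation {a, b}" "a \<noteq> b" "a \<ge> 2" "b \<ge> 2"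
  shows "\<exists>x y. x > 0 \<and> y > 0 \<and> a ^ x = b ^ y"
proof -
  obtain P Q x y where R: "P \<inter> Q = {}" "P \<union> Q = {a, b}" "\<forall>n\<in>P. x n > (0::nat)"
      "\<forall>n\<in>Q. y n > (0::nat)" "(\<Prod>n\<in>P. n ^ x n) = (\<Prod>n\<in>Q. n ^ y n)"
    using assms(1) unfolding power_relation_def by blast
  have fin: "finite P" "finite Q" using R(2) finite_Un[of P Q] by simp_all
  have no_unit: "(\<Prod>n\<in>{a, b}. n ^ z n) \<noteq> 1" if "z a > 0" for z :: "nat \<Rightarrow> nat"
  proof
    assume "(\<Prod>n\<in>{a, b}. n ^ z n) = 1"
    hence "z a = 0 \<or> a = 1" using prod_eq_1_iff[of "{a, b}" "\<lambda>n. n ^ z n"] by simp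
    thus False using that assms(3) by auto
  qed
  have "Q \<noteq> {}"
  proof
    assume "Q = {}"
    with R(2,5) have "(\<Prod>n\<in>{a, b}. n ^ x n) = 1" by simp
    moreover have "x a > 0" using R(2,3) \<open>Q = {}\<close> by auto
    ultimately show False using no_unit by blast
  qed
  moreover have "P \<noteq> {}"
  proof
    assume "P = {}"
    with R(2,5) have "(\<Prod>n\<in>{a, b}. n ^ y n) = 1" by simp
    moreover have "y a > 0" using R(2,4) \<open>P = {}\<close> by auto
    ultimately show False using no_unit by blast
  qed
  show ?thesis
  proof (cases "a \<in> P")
    case True
    hence "Q \<subseteq> {b}" using R(1,2) by auto
    hence "Q = {b}" using \<open>Q \<noteq> {}\<close> by (simp add: subset_singleton_iff)
    hence "P = {a}" using R(1,2) True assms(2) by blast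
    with \<open>Q = {b}\<close> R(3,4,5) show ?thesis by (intro exI[of _ "x a"] exI[of _ "y b"]) auto
  next
    case False
    hence "P \<subseteq> {b}" using R(2) by auto
    hence "P = {b}" using \<open>P \<noteq> {}\<close> by (simp add: subset_singleton_iff)
    hence "Q = {a}" using R(1,2) False assms(2) by blast
    with \<open>P = {b}\<close> R(3,4,5) show ?thesis by (intro exI[of _ "y a"] exI[of _ "x b"]) auto
  qed
qed

lemma primes_shared_prime_dvd_prod:
  assumes fin: "finite T" and "primes_shared T" and p: "prime p" "p dvd \<Prod>T"
  shows "p\<^sup>2 dvd \<Prod>T"
proof -
  obtain n where n: "n \<in> T" "p dvd n" using prime_dvd_prod_iff[OF fin p(1)] p(2) by auto
  then obtain m where m: "m \<in> T" "m \<noteq> n" "p dvd m"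
    using assms(2) p(1) unfolding primes_shared_def by blast
  have "p\<^sup>2 dvd n * m" using n m by (simp add: power2_eq_square mult_dvd_mono)
  also have "n * m = \<Prod>{n, m}" using m by simp
  also have "\<Prod>{n, m} dvd \<Prod>T" using fin n m by (intro prod_dvd_prod_subset) auto
  finally show ?thesis .
qed

lemma primes_shared_card_ge_2:
  assumes "primes_shared T" "finite T" "n \<in> T" "n \<ge> 2"
  shows "card T \<ge> 2"
proof -
  obtain p where "prime p" "p dvd n" using prime_factor_nat[of n] assms(4) by auto
  then obtain m where "m \<in> T" "m \<noteq> n" using assms(1,3) unfolding primes_shared_def by blast
  hence "card {n, m} \<le> card T" using assms(2,3) by (intro card_mono) auto
  thus ?thesis using \<open>m \<noteq> n\<close> by simp
qed

lemma squarefree_part_dvd_square_part: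
  fixes N :: nat
  assumes N: "N > 0" and powerful: "\<And>p. prime p \<Longrightarrow> p dvd N \<Longrightarrow> p\<^sup>2 dvd N"
  shows "squarefree_part N dvd square_part N"
proof -
  have "multiplicity p (squarefree_part N) \<le> multiplicity p (square_part N)" if p: "prime p" for p
  proof -
    define m where "m = multiplicity p N"
    have "m = 0 \<or> m \<ge> 2"
    proof (cases "m = 0")
      case False
      hence "p\<^sup>2 dvd N" using powerful p N unfolding m_def by (metis not_dvd_imp_multiplicity_0)
      thus ?thesis using N p unfolding m_def
        by (metis gr_implies_not0 not_prime_unit power_dvd_iff_le_multiplicity)
    qed simp
    hence "m mod 2 \<le> m div 2" by auto
    thus ?thesis
      using p by (simp add: prime_multiplicity_squarefree_part prime_multiplicity_square_part m_def)
  qed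
  thus ?thesis using N by (subst prime_multiplicity_le_imp_dvd) auto
qed

lemma pow_eq_pow_imp_common_base:
  fixes a b x y :: nat
  assumes ab: "a \<ge> 2" "b \<ge> 2" "a \<noteq> b" and xy: "x > 0" "y > 0" and eq: "a ^ x = b ^ y"
  shows "\<exists>c i j. c \<ge> 2 \<and> a = c ^ i \<and> b = c ^ j \<and> i \<ge> 1 \<and> j \<ge> 1 \<and> i \<noteq> j"
proof -
  define g where "g = gcd x y"
  define x' where "x' = x div g"
  define y' where "y' = y div g"
  have "x = g * x'" "y = g * y'" by (simp_all add: g_def x'_def y'_def)
  hence "x' > 0" "y' > 0" "g > 0" using xy by auto
  have cop: "coprime x' y'" unfolding x'_def y'_def g_def using xy by (intro div_gcd_coprime) auto
  have "(a ^ x') ^ g = (b ^ y') ^ g"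
    using eq \<open>x = g * x'\<close> \<open>y = g * y'\<close> by (simp add: power_mult[symmetric] mult.commute)
  hence eq': "a ^ x' = b ^ y'" using power_eq_imp_eq_base \<open>g > 0\<close> by blast
  have "is_nth_power x' b"
    unfolding is_nth_power_conv_multiplicity_nat[OF \<open>x' > 0\<close>]
  proof (intro allI impI)
    fix p :: nat assume p: "prime p"
    have "multiplicity p (a ^ x') = x' * multiplicity p a"
      "multiplicity p (b ^ y') = y' * multiplicity p b"
      using p ab by (auto intro!: prime_elem_multiplicity_power_distrib)
    hence "x' * multiplicity p a = y' * multiplicity p b" using eq' by simp
    hence "x' dvd y' * multiplicity p b" by (metis dvd_triv_left)
    thus "x' dvd multiplicity p b" using cop by (simp add: coprime_dvd_mult_right_iff)
  qed
  then obtain c where c: "b = c ^ x'" by (auto elim: is_nth_powerE)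
  have "a ^ x' = (c ^ y') ^ x'" using eq' c by (simp add: power_mult[symmetric] mult.commute)
  hence a: "a = c ^ y'" using power_eq_imp_eq_base \<open>x' > 0\<close> by blast
  have "c \<noteq> 0" using c ab(2) \<open>x' > 0\<close> by (cases "c = 0") (auto simp: power_0_left)
  moreover have "c \<noteq> 1" using c ab by auto
  moreover have "y' \<noteq> x'" using a c ab by auto
  ultimately show ?thesis using a c \<open>x' > 0\<close> \<open>y' > 0\<close> by (intro exI[of _ c] exI[of _ y'] exI[of _ x']) auto
qed

definition related_subsets :: "nat \<Rightarrow> nat \<Rightarrow> nat set set" where
  "related_subsets q t = {T. T \<subseteq> {2..<q} \<and> card T = t \<and> power_relation T}"

lemma card_k_subsets_le_power:
  assumes "finite A"
  shows "card {T. T \<subseteq> A \<and> card T = k} \<le> card A ^ k"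
  using assms by (cases "k \<le> card A") (auto simp: n_subsets binomial_le_pow binomial_eq_0)

lemma card_squares_le_sqrt: "real (card {c::nat. 0 < c \<and> c\<^sup>2 \<le> m}) \<le> sqrt (real m)"
proof -
  have "{c::nat. 0 < c \<and> c\<^sup>2 \<le> m} \<subseteq> {1..nat \<lfloor>sqrt (real m)\<rfloor>}"
  proof
    fix c assume c: "c \<in> {c::nat. 0 < c \<and> c\<^sup>2 \<le> m}"
    hence "real c ^ 2 \<le> real m" by (metis mem_Collect_eq of_nat_le_iff of_nat_power)
    hence "real c \<le> sqrt (real m)" by (rule real_le_rsqrt)
    thus "c \<in> {1..nat \<lfloor>sqrt (real m)\<rfloor>}" using c by (auto simp: le_nat_floor)
  qed
  hence "card {c::nat. 0 < c \<and> c\<^sup>2 \<le> m} \<le> nat \<lfloor>sqrt (real m)\<rfloor>"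
    by (metis card_atLeastAtMost card_mono diff_Suc_1 finite_atLeastAtMost)
  hence "real (card {c::nat. 0 < c \<and> c\<^sup>2 \<le> m}) \<le> real (nat \<lfloor>sqrt (real m)\<rfloor>)"
    by (rule of_nat_mono)
  also have "\<dots> \<le> sqrt (real m)" by simp
  finally show ?thesis .
qed

lemma card_exponents_le_log: "real (card {i::nat. 0 < i \<and> 2 ^ i < q}) \<le> max 0 (log 2 (real q))"
proof -
  have "{i::nat. 0 < i \<and> 2 ^ i < q} \<subseteq> {1..nat \<lfloor>log 2 (real q)\<rfloor>}"
  proof
    fix i assume i: "i \<in> {i::nat. 0 < i \<and> 2 ^ i < q}"
    hence "(2::real) powr real i < real q" by (simp add: powr_realpow)
    hence "real i < log 2 (real q)" by (subst less_log_iff) (use i in auto)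
    thus "i \<in> {1..nat \<lfloor>log 2 (real q)\<rfloor>}" using i by (auto simp: le_nat_floor)
  qed
  hence "card {i::nat. 0 < i \<and> 2 ^ i < q} \<le> nat \<lfloor>log 2 (real q)\<rfloor>"
    by (metis card_atLeastAtMost card_mono diff_Suc_1 finite_atLeastAtMost)
  thus ?thesis by linarith
qed

text \<open>A related pair consists of two powers of one base \<open>c\<close>, and \<open>c\<^sup>2 < q\<close>.\<close>
lemma related_pairs_subset:
  "related_subsets q 2 \<subseteq> (\<lambda>(c, i, j). {c ^ i, c ^ j}) `
     ({c. 0 < c \<and> c\<^sup>2 \<le> q} \<times> {i. 0 < i \<and> 2 ^ i < q} \<times> {i. 0 < i \<and> 2 ^ i < q})"
proof
  fix T assume "T \<in> related_subsets q 2"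
  hence T: "T \<subseteq> {2..<q}" "card T = 2" "power_relation T" by (auto simp: related_subsets_def)
  then obtain a b where ab: "T = {a, b}" "a \<noteq> b" by (auto simp: card_2_iff)
  have abq: "a \<ge> 2" "b \<ge> 2" "a < q" "b < q" using T(1) ab by auto
  obtain x y where "x > 0" "y > 0" "a ^ x = b ^ y"
    using power_relation_pair T(3) ab abq by blast
  then obtain c i j where cij: "c \<ge> 2" "a = c ^ i" "b = c ^ j" "i \<ge> 1" "j \<ge> 1" "i \<noteq> j"
    using pow_eq_pow_imp_common_base[OF abq(1,2) ab(2)] by blast
  have "c\<^sup>2 \<le> c ^ max i j" using cij by (intro power_increasing) auto
  also have "c ^ max i j < q" using abq cij by (simp add: max_def)
  finally have "c\<^sup>2 \<le> q" by simp
  moreover have "2 ^ i < q" "2 ^ j < q"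
    using power_mono[of "2::nat" c i] power_mono[of "2::nat" c j] cij(1-3) abq(3,4) by auto
  ultimately show "T \<in> (\<lambda>(c, i, j). {c ^ i, c ^ j}) `
     ({c. 0 < c \<and> c\<^sup>2 \<le> q} \<times> {i. 0 < i \<and> 2 ^ i < q} \<times> {i. 0 < i \<and> 2 ^ i < q})"
    using ab cij abq by (intro image_eqI[of _ _ "(c, i, j)"]) auto
qed

lemma card_related_pairs_le:
  "real (card (related_subsets q 2)) \<le> sqrt (real q) * (max 0 (log 2 (real q)))\<^sup>2"
proof -
  define C where "C = {c::nat. 0 < c \<and> c\<^sup>2 \<le> q}"
  define I where "I = {i::nat. 0 < i \<and> 2 ^ i < q}"
  have "C \<subseteq> {..q}" by (auto simp: C_def dest: power2_nat_le_imp_le)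
  moreover have "I \<subseteq> {..q}" by (auto simp: I_def dest!: less_exp[THEN less_trans])
  ultimately have fin: "finite (C \<times> I \<times> I)"
    using finite_subset[OF _ finite_atMost] by (intro finite_cartesian_product) blast+
  have "card (related_subsets q 2) \<le> card ((\<lambda>(c, i, j). {c ^ i, c ^ j}) ` (C \<times> I \<times> I))"
    using related_pairs_subset fin unfolding C_def I_def by (intro card_mono) auto
  also have "\<dots> \<le> card C * card I * card I"
    using card_image_le[OF fin] by (simp add: card_cartesian_product mult.assoc)
  finally have "real (card (related_subsets q 2)) \<le> real (card C) * real (card I) * real (card I)"
    by (metis of_nat_le_iff of_nat_mult)
  also have "\<dots> \<le> sqrt (real q) * max 0 (log 2 (real q)) * max 0 (log 2 (real q))"
    using card_squares_le_sqrt[of q] card_exponents_le_log[of q] unfolding C_def I_def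
    by (intro mult_mono) auto
  finally show ?thesis by (simp add: power2_eq_square mult.assoc)
qed

lemma primes_shared_prod_eq_powerful:
  assumes "finite T" "0 \<notin> T" "primes_shared T"
  obtains v s where "s > 0" "v dvd s" "\<Prod>T = v * s\<^sup>2"
proof
  have "\<Prod>T > 0" using assms(2) by (intro prod_pos) (metis gr0I)
  thus "square_part (\<Prod>T) > 0" by (intro Nat.gr0I) simp
  show "squarefree_part (\<Prod>T) dvd square_part (\<Prod>T)"
    using \<open>\<Prod>T > 0\<close> primes_shared_prime_dvd_prod[OF assms(1,3)] by (rule squarefree_part_dvd_square_part)
qed (rule squarefree_decompose)

text \<open>The product of a related \<open>t\<close>-set is \<open>v * s\<^sup>2 \<le> q ^ t\<close> with \<open>v dvd s\<close>, and the set
  consists of divisors of that product.\<close>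
lemma related_subsets_subset:
  "related_subsets q t \<subseteq> (\<Union>s\<in>{s. 0 < s \<and> s\<^sup>2 \<le> q ^ t}. \<Union>v\<in>{v. v dvd s \<and> v * s\<^sup>2 \<le> q ^ t}.
     {T. T \<subseteq> {d. d dvd v * s\<^sup>2} \<and> card T = t})"
proof
  fix T assume "T \<in> related_subsets q t"
  hence T: "T \<subseteq> {2..<q}" "card T = t" "power_relation T" by (auto simp: related_subsets_def)
  have fin: "finite T" using T(1) by (rule finite_subset) simp
  have "0 \<notin> T" using T(1) by auto
  then obtain v s where vs: "s > 0" "v dvd s" "\<Prod>T = v * s\<^sup>2"
    using primes_shared_prod_eq_powerful[OF fin _ power_relation_imp_primes_shared[OF fin T(3)]]
    by blast
  have "\<Prod>T \<le> (\<Prod>n\<in>T. q)" using T(1) by (intro prod_mono) auto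
  hence "v * s\<^sup>2 \<le> q ^ t" using T(2) vs(3) by simp
  moreover from this have "s\<^sup>2 \<le> q ^ t" using vs by (cases v) auto
  moreover have "T \<subseteq> {d. d dvd v * s\<^sup>2}" using dvd_prodI[OF fin, of _ id] vs(3) by auto
  ultimately show "T \<in> (\<Union>s\<in>{s. 0 < s \<and> s\<^sup>2 \<le> q ^ t}. \<Union>v\<in>{v. v dvd s \<and> v * s\<^sup>2 \<le> q ^ t}.
     {T. T \<subseteq> {d. d dvd v * s\<^sup>2} \<and> card T = t})"
    using vs T(2) by blast
qed

lemma card_related_subsets_le:
  assumes \<delta>: "0 < \<delta>" "\<delta> \<le> 1"
  shows "real (card (related_subsets q t))
           \<le> sqrt (real q ^ t) * divisor_bound \<delta> (real q ^ t) ^ (t + 1)"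
proof -
  define Y where "Y = divisor_bound \<delta> (real q ^ t)"
  define S where "S = {s::nat. 0 < s \<and> s\<^sup>2 \<le> q ^ t}"
  define V where "V s = {v. v dvd s \<and> v * s\<^sup>2 \<le> q ^ t}" for s
  define D where "D v s = {T. T \<subseteq> {d. d dvd v * s\<^sup>2} \<and> card T = t}" for v s :: nat
  have Y: "Y \<ge> 0" by (simp add: Y_def)
  have dc_le_Y: "real (divisor_count m) \<le> Y" if "0 < m" "m \<le> q ^ t" for m
    using divisor_count_le_divisor_bound_of_le[OF \<delta> that] by (simp add: Y_def)
  have S: "finite S" using finite_subset[of S "{..q ^ t}"]
    by (auto simp: S_def dest: power2_nat_le_imp_le)
  have V: "finite (V s)" "real (card (V s)) \<le> Y" if "s \<in> S" for s
  proof -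
    have sub: "V s \<subseteq> {d. d dvd s}" and s: "0 < s" "s \<le> q ^ t" using that
      by (auto simp: V_def S_def dest: power2_nat_le_imp_le)
    thus "finite (V s)" by (intro finite_subset[OF sub]) simp
    have "real (card (V s)) \<le> real (divisor_count s)"
      unfolding divisor_count_def using sub s by (intro of_nat_mono card_mono) auto
    also have "\<dots> \<le> Y" using dc_le_Y[OF s] .
    finally show "real (card (V s)) \<le> Y" .
  qed
  have D: "finite (D v s)" "real (card (D v s)) \<le> Y ^ t" if "s \<in> S" "v \<in> V s" for s v
  proof -
    have pos: "0 < v * s\<^sup>2" "v * s\<^sup>2 \<le> q ^ t"
      using that by (auto simp: S_def V_def intro!: Nat.gr0I)
    show "finite (D v s)" using pos by (simp add: D_def)
    have "card (D v s) \<le> divisor_count (v * s\<^sup>2) ^ t"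
      unfolding D_def divisor_count_def using pos by (intro card_k_subsets_le_power) simp
    hence "real (card (D v s)) \<le> real (divisor_count (v * s\<^sup>2)) ^ t"
      by (metis of_nat_le_iff of_nat_power)
    also have "\<dots> \<le> Y ^ t" using dc_le_Y[OF pos] by (intro power_mono) auto
    finally show "real (card (D v s)) \<le> Y ^ t" .
  qed
  have "card (related_subsets q t) \<le> card (\<Union>s\<in>S. \<Union>v\<in>V s. D v s)"
    using related_subsets_subset[of q t] S V D
    unfolding S_def[symmetric] V_def[symmetric] D_def[symmetric] by (intro card_mono) auto
  also have "\<dots> \<le> (\<Sum>s\<in>S. \<Sum>v\<in>V s. card (D v s))"
    using S V by (intro order_trans[OF card_UN_le] sum_mono card_UN_le) auto
  finally have "real (card (related_subsets q t)) \<le> (\<Sum>s\<in>S. \<Sum>v\<in>V s. real (card (D v s)))"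
    by (metis (mono_tags, lifting) of_nat_le_iff of_nat_sum sum.cong)
  also have "\<dots> \<le> (\<Sum>s\<in>S. real (card (V s)) * Y ^ t)"
    using D by (intro sum_mono) (simp add: sum_bounded_above)
  also have "\<dots> \<le> (\<Sum>s\<in>S. Y * Y ^ t)" using V Y by (intro sum_mono mult_right_mono) auto
  also have "\<dots> = real (card S) * Y ^ (t + 1)" by simp
  also have "\<dots> \<le> sqrt (real q ^ t) * Y ^ (t + 1)"
    using card_squares_le_sqrt[of "q ^ t"] Y unfolding S_def by (intro mult_right_mono) auto
  finally show ?thesis by (simp add: Y_def)
qed

definition dependent_subsets :: "nat \<Rightarrow> nat \<Rightarrow> nat set set" where
  "dependent_subsets q k = {S. S \<subseteq> {2..<q} \<and> card S = k \<and> \<not> mult_indep S}"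

lemma card_indep_plus_card_dependent_subsets:
  "card {S. S \<subseteq> {2..<q} \<and> card S = k \<and> mult_indep S} + card (dependent_subsets q k)
     = (q - 2) choose k"
proof -
  have fin: "finite {S. S \<subseteq> {2..<q} \<and> P S}" for P
    by (rule finite_subset[of _ "Pow {2..<q}"]) auto
  have "(q - 2) choose k = card {S. S \<subseteq> {2..<q} \<and> card S = k}" by (simp add: n_subsets)
  also have "{S. S \<subseteq> {2..<q} \<and> card S = k} =
          {S. S \<subseteq> {2..<q} \<and> card S = k \<and> mult_indep S} \<union> dependent_subsets q k"
    by (auto simp: dependent_subsets_def)
  also have "card \<dots> = card {S. S \<subseteq> {2..<q} \<and> card S = k \<and> mult_indep S} + card (dependent_subsets q k)"
    unfolding dependent_subsets_def by (rule card_Un_disjoint[OF fin fin]) auto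
  finally show ?thesis by simp
qed

lemma card_supersets_le:
  assumes "finite U" "T \<subseteq> U"
  shows "card {S. S \<subseteq> U \<and> card S = k \<and> T \<subseteq> S} \<le> card U ^ (k - card T)"
proof -
  have "finite T" using assms by (rule finite_subset[rotated])
  have "card {S. S \<subseteq> U \<and> card S = k \<and> T \<subseteq> S} \<le> card {R. R \<subseteq> U \<and> card R = k - card T}"
  proof (rule card_inj_on_le[of "\<lambda>S. S - T"])
    show "inj_on (\<lambda>S. S - T) {S. S \<subseteq> U \<and> card S = k \<and> T \<subseteq> S}" by (rule inj_onI) blast
    show "(\<lambda>S. S - T) ` {S. S \<subseteq> U \<and> card S = k \<and> T \<subseteq> S} \<subseteq> {R. R \<subseteq> U \<and> card R = k - card T}"
      using \<open>finite T\<close> by (auto simp: card_Diff_subset)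
  qed (use assms in simp)
  also have "\<dots> \<le> card U ^ (k - card T)" using assms(1) by (rule card_k_subsets_le_power)
  finally show ?thesis .
qed

text \<open>A dependent \<open>k\<close>-set contains a related \<open>t\<close>-set; \<open>t \<ge> 2\<close> because its primes are shared.\<close>
lemma dependent_subsets_subset:
  "dependent_subsets q k \<subseteq>
     (\<Union>t\<in>{2..k}. \<Union>T\<in>related_subsets q t. {S. S \<subseteq> {2..<q} \<and> card S = k \<and> T \<subseteq> S})"
proof
  fix S assume "S \<in> dependent_subsets q k"
  hence S: "S \<subseteq> {2..<q}" "card S = k" "\<not> mult_indep S" by (auto simp: dependent_subsets_def)
  have "finite S" using S(1) by (rule finite_subset) simp
  then obtain T where T: "T \<subseteq> S" "T \<noteq> {}" "power_relation T"
    using not_mult_indep_imp_power_relation S(3) by blast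
  have "finite T" using \<open>finite S\<close> T(1) by (rule finite_subset[rotated])
  obtain n where "n \<in> T" using T(2) by blast
  hence "card T \<ge> 2"
    using primes_shared_card_ge_2[OF power_relation_imp_primes_shared[OF \<open>finite T\<close> T(3)]]
      \<open>finite T\<close> T(1) S(1) by auto
  moreover have "card T \<le> k" using card_mono[OF \<open>finite S\<close> T(1)] S(2) by simp
  ultimately have "card T \<in> {2..k}" by simp
  moreover have "T \<in> related_subsets q (card T)" using T S(1) by (auto simp: related_subsets_def)
  ultimately show "S \<in> (\<Union>t\<in>{2..k}. \<Union>T\<in>related_subsets q t. {S. S \<subseteq> {2..<q} \<and> card S = k \<and> T \<subseteq> S})"
    using S T(1) by blast
qed

lemma card_dependent_subsets_le_sum:
  "real (card (dependent_subsets q k))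
     \<le> (\<Sum>t\<in>{2..k}. real (card (related_subsets q t)) * real q ^ (k - t))"
proof -
  have fin: "finite (related_subsets q t)" for t
    by (rule finite_subset[of _ "Pow {2..<q}"]) (auto simp: related_subsets_def)
  have "card (dependent_subsets q k)
          \<le> card (\<Union>t\<in>{2..k}. \<Union>T\<in>related_subsets q t. {S. S \<subseteq> {2..<q} \<and> card S = k \<and> T \<subseteq> S})"
    by (rule card_mono[OF _ dependent_subsets_subset]) (auto intro!: finite_UN_I fin)
  also have "\<dots> \<le> (\<Sum>t\<in>{2..k}. \<Sum>T\<in>related_subsets q t. card {S. S \<subseteq> {2..<q} \<and> card S = k \<and> T \<subseteq> S})"
    by (intro order_trans[OF card_UN_le] sum_mono card_UN_le fin) auto
  also have "\<dots> \<le> (\<Sum>t\<in>{2..k}. \<Sum>T\<in>related_subsets q t. q ^ (k - t))"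
  proof (intro sum_mono)
    fix t T assume "T \<in> related_subsets q t"
    hence "T \<subseteq> {2..<q}" "card T = t" by (auto simp: related_subsets_def)
    hence "card {S. S \<subseteq> {2..<q} \<and> card S = k \<and> T \<subseteq> S} \<le> (q - 2) ^ (k - t)"
      using card_supersets_le[of "{2..<q}" T k] by simp
    also have "\<dots> \<le> q ^ (k - t)" by (intro power_mono) auto
    finally show "card {S. S \<subseteq> {2..<q} \<and> card S = k \<and> T \<subseteq> S} \<le> q ^ (k - t)" .
  qed
  also have "\<dots> = (\<Sum>t\<in>{2..k}. card (related_subsets q t) * q ^ (k - t))" by simp
  finally have "real (card (dependent_subsets q k))
                  \<le> real (\<Sum>t\<in>{2..k}. card (related_subsets q t) * q ^ (k - t))"
    by (rule of_nat_mono)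
  thus ?thesis by simp
qed

lemma sqrt_power_eq_powr: "0 < x \<Longrightarrow> sqrt (x ^ t) = x powr (real t / 2)"
  by (simp add: powr_half_sqrt[symmetric] powr_realpow[symmetric] powr_powr)

lemma related_pairs_extension_le:
  assumes "q > 0" "k \<ge> 2"
  shows "real (card (related_subsets q 2)) * real q ^ (k - 2)
           \<le> real q powr (real k - 3/2) * (max 0 (log 2 (real q)))\<^sup>2"
proof -
  have "real (card (related_subsets q 2)) * real q ^ (k - 2)
          \<le> (sqrt (real q) * (max 0 (log 2 (real q)))\<^sup>2) * real q ^ (k - 2)"
    by (intro mult_right_mono card_related_pairs_le) auto
  also have "\<dots> = (sqrt (real q) * real q ^ (k - 2)) * (max 0 (log 2 (real q)))\<^sup>2"
    by (simp add: mult_ac)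
  also have "sqrt (real q) * real q ^ (k - 2) = real q powr (real k - 3/2)"
    using assms sqrt_power_eq_powr[of "real q" 1]
    by (simp add: powr_realpow[symmetric] powr_add[symmetric] of_nat_diff)
  finally show ?thesis .
qed

lemma related_subsets_extension_le:
  assumes q: "q > 0" and t: "3 \<le> t" "t \<le> k" and \<delta>: "0 < \<delta>" "\<delta> \<le> 1"
  shows "real (card (related_subsets q t)) * real q ^ (k - t)
           \<le> real q powr (real k - 3/2) * divisor_bound \<delta> (real q ^ k) ^ (k + 1)"
proof -
  define W where "W = divisor_bound \<delta> (real q ^ k) ^ (k + 1)"
  have q1: "1 \<le> real q ^ t" "real q ^ t \<le> real q ^ k" using q t by (auto intro: power_increasing)
  have "divisor_bound \<delta> (real q ^ t) ^ (t + 1) \<le> divisor_bound \<delta> (real q ^ k) ^ (t + 1)"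
    using q1 \<delta> divisor_bound_ge_one[OF \<delta> q1(1)] by (intro power_mono divisor_bound_mono) auto
  also have "\<dots> \<le> W"
    unfolding W_def using q1 t \<delta> divisor_bound_ge_one[OF \<delta>, of "real q ^ k"]
    by (intro power_increasing) auto
  finally have "sqrt (real q ^ t) * divisor_bound \<delta> (real q ^ t) ^ (t + 1) \<le> sqrt (real q ^ t) * W"
    by (rule mult_left_mono) simp
  with card_related_subsets_le[OF \<delta>, of q t]
  have "real (card (related_subsets q t)) * real q ^ (k - t) \<le> (sqrt (real q ^ t) * W) * real q ^ (k - t)"
    by (intro mult_right_mono) auto
  also have "\<dots> = (sqrt (real q ^ t) * real q ^ (k - t)) * W" by (simp add: mult_ac)
  also have "sqrt (real q ^ t) * real q ^ (k - t) = real q powr (real t / 2 + (real k - real t))"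
  proof -
    have "real q ^ (k - t) = real q powr (real k - real t)"
      using q t by (simp add: powr_realpow[symmetric] of_nat_diff)
    thus ?thesis using q by (simp add: sqrt_power_eq_powr flip: powr_add)
  qed
  also have "\<dots> = real q powr (real k - real t / 2)" by simp
  also have "\<dots> * W \<le> real q powr (real k - 3/2) * W"
    using q t divisor_bound_ge_one[OF \<delta>, of "real q ^ k"]
    by (intro mult_right_mono powr_mono) (auto simp: W_def)
  finally show ?thesis by (simp add: W_def)
qed

lemma card_dependent_subsets_le:
  assumes q: "q > 0" and \<delta>: "0 < \<delta>" "\<delta> \<le> 1"
  shows "real (card (dependent_subsets q k)) \<le> real k * real q powr (real k - 3/2) *
           ((max 0 (log 2 (real q)))\<^sup>2 + divisor_bound \<delta> (real q ^ k) ^ (k + 1))"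
proof -
  define R where "R = real q powr (real k - 3/2) *
           ((max 0 (log 2 (real q)))\<^sup>2 + divisor_bound \<delta> (real q ^ k) ^ (k + 1))"
  have W: "1 \<le> divisor_bound \<delta> (real q ^ k) ^ (k + 1)"
    using divisor_bound_ge_one[OF \<delta>, of "real q ^ k"] q by (intro one_le_power) simp
  have R: "0 \<le> R" using W unfolding R_def by (intro mult_nonneg_nonneg) auto
  have "real (card (related_subsets q t)) * real q ^ (k - t) \<le> R" if t: "t \<in> {2..k}" for t
  proof (cases "t = 2")
    case True
    hence "real (card (related_subsets q t)) * real q ^ (k - t)
             \<le> real q powr (real k - 3/2) * (max 0 (log 2 (real q)))\<^sup>2"
      using related_pairs_extension_le[OF q] t by simp
    also have "\<dots> \<le> R" unfolding R_def using W by (intro mult_left_mono) auto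
    finally show ?thesis .
  next
    case False
    hence "real (card (related_subsets q t)) * real q ^ (k - t)
             \<le> real q powr (real k - 3/2) * divisor_bound \<delta> (real q ^ k) ^ (k + 1)"
      using related_subsets_extension_le[OF q _ _ \<delta>] t by simp
    also have "\<dots> \<le> R" unfolding R_def by (intro mult_left_mono) auto
    finally show ?thesis .
  qed
  hence "real (card (dependent_subsets q k)) \<le> (\<Sum>t\<in>{2..k}. R)"
    using card_dependent_subsets_le_sum by (meson order_trans sum_mono)
  also have "\<dots> \<le> real k * R" using R by (simp add: mult_right_mono)
  finally show ?thesis by (simp add: R_def mult.assoc)
qed

lemma divisor_bound_loglog_eq:
  fixes x :: real
  assumes x: "x > 1" and ll: "ln (ln x) > 0"
  shows "divisor_bound (2 * ln 2 / ln (ln x)) (x ^ k)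
           = exp (real k * (2 * ln 2 / ln (ln x)) * ln x + (sqrt (ln x) + 1) * ln (ln (ln x) / ln 2))"
proof -
  define \<delta> where "\<delta> = 2 * ln 2 / ln (ln x)"
  have lx: "ln x > 0" using x by simp
  have "(x ^ k) powr \<delta> = exp (real k * \<delta> * ln x)"
    using x by (simp add: powr_realpow[symmetric] powr_powr powr_def mult_ac)
  moreover have "2 powr (1/\<delta>) = sqrt (ln x)"
  proof -
    have "2 powr (1/\<delta>) = ln x powr (1/2)" using ll lx by (simp add: powr_def \<delta>_def)
    thus ?thesis using lx by (simp add: powr_half_sqrt)
  qed
  moreover have "2/\<delta> = ln (ln x) / ln 2" by (simp add: \<delta>_def)
  ultimately show ?thesis
    using ll by (simp add: divisor_bound_def powr_def exp_add \<delta>_def[symmetric] mult_ac)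
qed

lemma Suc_mult_loglog_exponent_le:
  fixes l c \<eta> :: real
  assumes l: "l \<ge> 2" and k: "k \<ge> 1" "real k \<le> c * sqrt l" and c: "0 \<le> c" "16 * c\<^sup>2 \<le> \<eta>"
  shows "(real k + 1) * (real k * (2 * ln 2 / l)) \<le> \<eta>/4"
proof -
  have ln2: "0 < ln (2::real)" "ln (2::real) < 1" using ln_2_less_1 by auto
  have "real k ^ 2 \<le> (c * sqrt l) ^ 2" using k c l by (intro power_mono) auto
  hence kk: "real k ^ 2 \<le> c\<^sup>2 * l" using l by (simp add: power_mult_distrib)
  have "(real k + 1) * (real k * (2 * ln 2 / l)) \<le> (2 * real k) * (real k * (2 * ln 2 / l))"
    using k ln2 l by (intro mult_right_mono) auto
  also have "\<dots> = 2 * real k ^ 2 * (2 * ln 2 / l)" by (simp add: power2_eq_square)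
  also have "\<dots> \<le> 2 * (c\<^sup>2 * l) * (2 * ln 2 / l)" using kk ln2 l by (intro mult_right_mono) auto
  also have "\<dots> = 4 * c\<^sup>2 * ln 2" using l by (simp add: field_simps)
  also have "\<dots> \<le> \<eta>/4" using ln2 c mult_left_mono[of "ln 2" 1 "4 * c\<^sup>2"] by simp
  finally show ?thesis .
qed

text \<open>For \<open>k = o(sqrt (ln (ln x)))\<close> this makes the divisor bound \<open>x powr o(1)\<close>; the
  hypothesis \<open>small\<close> absorbs the factor \<open>(2/\<delta>) powr (sqrt (ln x) + 1)\<close>.\<close>
lemma divisor_bound_loglog_power_le:
  fixes x c \<eta> :: real
  assumes x: "x > 1" and ll: "ln (ln x) \<ge> 2" and k: "k \<ge> 1" "real k \<le> c * sqrt (ln (ln x))"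
    and c: "0 \<le> c" "c \<le> 1" "16 * c\<^sup>2 \<le> \<eta>"
    and small: "sqrt (ln (ln x)) * (sqrt (ln x) + 1) * ln (ln (ln x) / ln 2) \<le> \<eta>/16 * ln x"
  shows "divisor_bound (2 * ln 2 / ln (ln x)) (x ^ k) ^ (k + 1) \<le> x powr (\<eta>/2)"
proof -
  define lx where "lx = ln x"
  define l2 where "l2 = ln (ln x)"
  define \<delta> where "\<delta> = 2 * ln 2 / l2"
  define B where "B = (sqrt lx + 1) * ln (l2 / ln 2)"
  have lx0: "lx > 0" using x by (simp add: lx_def)
  have l2: "l2 \<ge> 2" using ll by (simp add: l2_def)
  have ln2: "0 < ln (2::real)" "ln (2::real) < 1" using ln_2_less_1 by auto
  have "B \<ge> 0" using ln2 l2 lx0 unfolding B_def by (intro mult_nonneg_nonneg) (auto simp: field_simps)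
  have "(real k + 1) * (real k * \<delta>) \<le> \<eta>/4"
    unfolding \<delta>_def using l2 k(1) k(2)[folded l2_def] c(1,3) by (rule Suc_mult_loglog_exponent_le)
  hence t1: "(real k + 1) * (real k * \<delta> * lx) \<le> \<eta>/4 * lx"
    using lx0 mult_right_mono by (fastforce simp: mult_ac)
  have "(real k + 1) * B \<le> (2 * (c * sqrt l2)) * B"
    using k(1,2) \<open>B \<ge> 0\<close> by (intro mult_right_mono) (auto simp: l2_def)
  also have "\<dots> \<le> 2 * sqrt l2 * B"
    using c \<open>B \<ge> 0\<close> l2 by (intro mult_right_mono) (auto simp: mult_left_le_one_le)
  also have "\<dots> \<le> \<eta>/8 * lx" using small by (simp add: B_def l2_def lx_def mult_ac)
  finally have t2: "(real k + 1) * B \<le> \<eta>/8 * lx" .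
  have "divisor_bound \<delta> (x ^ k) = exp (real k * \<delta> * lx + B)"
    using divisor_bound_loglog_eq[OF x, of k] l2 by (simp add: \<delta>_def l2_def lx_def B_def)
  hence "divisor_bound \<delta> (x ^ k) ^ (k + 1) = exp (real (k + 1) * (real k * \<delta> * lx + B))"
    by (simp only: exp_of_nat_mult)
  also have "\<dots> = exp ((real k + 1) * (real k * \<delta> * lx + B))" by simp
  also have "\<dots> \<le> exp (\<eta>/2 * lx)"
  proof -
    have "0 \<le> \<eta>" using c(3) zero_le_power2[of c] by linarith
    have "(real k + 1) * (real k * \<delta> * lx + B) \<le> \<eta>/4 * lx + \<eta>/8 * lx"
      using t1 t2 by (simp only: distrib_left)
    also have "\<dots> \<le> \<eta>/2 * lx" using lx0 \<open>0 \<le> \<eta>\<close> by simp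
    finally show ?thesis by simp
  qed
  also have "\<dots> = x powr (\<eta>/2)" using x by (simp add: powr_def lx_def mult_ac)
  finally show ?thesis by (simp add: \<delta>_def l2_def)
qed

lemma card_dependent_subsets_le_powr:
  fixes c \<eta> :: real
  assumes q: "q \<ge> 3" "ln (ln (real q)) \<ge> 2"
    and k: "k \<ge> 1" "real k \<le> c * sqrt (ln (ln (real q)))" "real k \<le> real q powr (\<eta>/8)"
    and c: "0 \<le> c" "c \<le> 1" "16 * c\<^sup>2 \<le> \<eta>"
    and small: "sqrt (ln (ln (real q))) * (sqrt (ln (real q)) + 1) * ln (ln (ln (real q)) / ln 2)
                  \<le> \<eta>/16 * ln (real q)"
    and log: "(max 0 (log 2 (real q)))\<^sup>2 \<le> real q powr (\<eta>/8)"
  shows "real (card (dependent_subsets q k)) \<le> 2 * real q powr (real k - 3/2 + 5*\<eta>/8)"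
proof -
  define x where "x = real q"
  define \<delta> where "\<delta> = 2 * ln 2 / ln (ln x)"
  have x: "x > 1" using q by (simp add: x_def)
  have "0 \<le> \<eta>" using c(3) zero_le_power2[of c] by linarith
  have "0 < \<delta>" "\<delta> \<le> 1" using q(2) ln_2_less_1 by (auto simp: \<delta>_def x_def field_simps)
  hence "real (card (dependent_subsets q k)) \<le> real k * x powr (real k - 3/2) *
           ((max 0 (log 2 x))\<^sup>2 + divisor_bound \<delta> (x ^ k) ^ (k + 1))"
    using card_dependent_subsets_le[of q] q by (simp add: x_def)
  also have "\<dots> \<le> x powr (\<eta>/8) * x powr (real k - 3/2) * (x powr (\<eta>/8) + x powr (\<eta>/2))"
    using k(3) log divisor_bound_loglog_power_le[OF x _ k(1) _ c small[folded x_def]] q(2) k(2)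
    by (intro mult_mono add_mono) (auto simp: x_def \<delta>_def)
  also have "\<dots> \<le> x powr (\<eta>/8) * x powr (real k - 3/2) * (2 * x powr (\<eta>/2))"
    using x \<open>0 \<le> \<eta>\<close> by (intro mult_left_mono) (auto intro!: powr_mono)
  also have "\<dots> = 2 * x powr (real k - 3/2 + 5*\<eta>/8)" by (simp add: powr_add[symmetric] field_simps)
  finally show ?thesis by (simp add: x_def)
qed

lemma eventually_le_mult_sqrt_loglog:
  assumes "(\<lambda>q. real (k q)) \<in> o[at_top](\<lambda>q. sqrt (Log2 (real q)))" and "c > 0"
  shows "eventually (\<lambda>q. real (k q) \<le> c * sqrt (ln (ln (real q)))) at_top"
proof -
  have "eventually (\<lambda>q::nat. ln (real q) \<ge> 2) at_top"
    "eventually (\<lambda>q::nat. ln (ln (real q)) \<ge> 2) at_top" by real_asymp+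
  with landau_o.smallD[OF assms] show ?thesis
    by eventually_elim (simp add: Log2_def Log_def)
qed

lemma eventually_card_dependent_subsets_le:
  assumes k: "\<forall>q. k q > 0" "(\<lambda>q. real (k q)) \<in> o[at_top](\<lambda>q. sqrt (Log2 (real q)))"
    and \<eta>: "0 < \<eta>" "\<eta> \<le> 1"
  shows "eventually (\<lambda>q. real (card (dependent_subsets q (k q)))
                            \<le> 2 * real q powr (real (k q) - 3/2 + 5*\<eta>/8)) at_top"
proof -
  define c where "c = sqrt \<eta> / 4"
  have "sqrt \<eta> \<le> 1" using \<eta> by simp
  hence c: "c > 0" "c \<le> 1" "16 * c\<^sup>2 \<le> \<eta>"
    using \<eta> by (auto simp: c_def power_divide simp del: real_sqrt_le_1_iff)
  have "eventually (\<lambda>q::nat. 2 \<le> ln (ln (real q))) at_top"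
    "eventually (\<lambda>q::nat. sqrt (ln (ln (real q))) * (sqrt (ln (real q)) + 1) * ln (ln (ln (real q)) / ln 2)
       \<le> \<eta>/16 * ln (real q)) at_top"
    "eventually (\<lambda>q::nat. (log 2 (real q))\<^sup>2 \<le> real q powr (\<eta>/8)) at_top"
    "eventually (\<lambda>q::nat. 0 \<le> log 2 (real q)) at_top"
    "eventually (\<lambda>q::nat. sqrt (ln (ln (real q))) \<le> real q powr (\<eta>/8)) at_top"
    using \<eta> by real_asymp+
  with eventually_ge_at_top[of 3] eventually_le_mult_sqrt_loglog[OF k(2) c(1)]
    eventually_le_mult_sqrt_loglog[OF k(2) zero_less_one]
  show ?thesis
  proof eventually_elim
    case (elim q)
    have "k q \<ge> 1" using k(1) by (simp add: Suc_le_eq)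
    moreover have "real (k q) \<le> real q powr (\<eta>/8)" using elim by simp
    ultimately show ?case
      using elim c by (intro card_dependent_subsets_le_powr) (auto simp: max_def)
  qed
qed

lemma powr_shift_le:
  fixes n a :: real
  assumes "n \<ge> 1" "a \<le> real k" "2 * real k \<le> n"
  shows "(n + 2) powr a \<le> 3 * n powr a"
proof -
  have "(1 + 2/n) powr a \<le> (1 + 2/n) powr real k"
    using assms(1,2) by (intro powr_mono) auto
  also have "(1 + 2/n) powr real k = (1 + 2/n) ^ k"
    using assms(1) by (intro powr_realpow) (simp add: add_pos_nonneg)
  also have "\<dots> \<le> exp (2/n) ^ k"
    using exp_ge_add_one_self[of "2/n"] assms(1) by (intro power_mono) auto
  also have "\<dots> = exp (real k * (2/n))" by (rule exp_of_nat_mult[symmetric])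
  also have "\<dots> \<le> exp 1" using assms by (simp add: field_simps)
  also have "\<dots> \<le> 3" by (rule exp_le)
  finally have "n powr a * (1 + 2/n) powr a \<le> n powr a * 3" by (intro mult_left_mono) auto
  moreover have "(n + 2) powr a = n powr a * (1 + 2/n) powr a"
    using assms(1) by (simp add: powr_mult[symmetric] distrib_left)
  ultimately show ?thesis by (simp add: mult.commute)
qed

lemma eventually_card_dependent_subsets_le_card_powr:
  assumes k: "\<forall>q. k q > 0" "(\<lambda>q. real (k q)) \<in> o[at_top](\<lambda>q. sqrt (Log2 (real q)))"
    and \<eta>: "0 < \<eta>" "\<eta> \<le> 1"
  shows "eventually (\<lambda>q. real (card (dependent_subsets q (k q)))
                            \<le> real (q - 2) powr (real (k q) - 3/2 + \<eta>)) at_top"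
proof -
  have ev: "eventually (\<lambda>q::nat. 6 \<le> (real q - 2) powr (3*\<eta>/8)) at_top"
    "eventually (\<lambda>q::nat. 2 * sqrt (ln (ln (real q))) + 4 \<le> real q - 2) at_top"
    using \<eta> by real_asymp+
  show ?thesis
    using eventually_card_dependent_subsets_le[OF k \<eta>] eventually_ge_at_top[of 3]
      eventually_le_mult_sqrt_loglog[OF k(2) zero_less_one] ev
  proof eventually_elim
    case (elim q)
    define n where "n = real (q - 2)"
    define a where "a = real (k q) - 3/2 + 5*\<eta>/8"
    have n: "real q = n + 2" "n \<ge> 1" using elim(2) by (auto simp: n_def of_nat_diff)
    have "real q powr a \<le> 3 * n powr a"
      unfolding n(1) using n elim(3,5) \<eta> by (intro powr_shift_le[where k = "k q"]) (auto simp: a_def)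
    hence "real (card (dependent_subsets q (k q))) \<le> 6 * n powr a" using elim(1) by (simp add: a_def)
    also have "\<dots> \<le> n powr (3*\<eta>/8) * n powr a"
      using elim(4) n(1) by (intro mult_right_mono) auto
    also have "\<dots> = n powr (real (k q) - 3/2 + \<eta>)" by (simp add: powr_add[symmetric] a_def algebra_simps)
    finally show ?case by (simp add: n_def)
  qed
qed

text \<open>\<open>\<epsilon> q\<close> is taken as small as the value \<open>f q\<close> allows; the bound for each fixed \<open>\<eta>\<close>
  then forces \<open>\<epsilon> \<longlongrightarrow> 0\<close>.\<close>
lemma exists_vanishing_exponent:
  fixes f n a :: "nat \<Rightarrow> real"
  assumes bound: "\<And>\<eta>. 0 < \<eta> \<Longrightarrow> \<eta> \<le> 1 \<Longrightarrow> eventually (\<lambda>q. f q \<le> n q powr (a q + \<eta>)) at_top"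
    and n: "eventually (\<lambda>q. 1 < n q) at_top"
  shows "\<exists>\<epsilon>. (\<epsilon> \<longlongrightarrow> 0) at_top \<and> eventually (\<lambda>q. f q \<le> n q powr (a q + \<epsilon> q)) at_top"
proof -
  define \<epsilon> where
    "\<epsilon> q = (if 1 < n q \<and> 0 < f q then max 0 (ln (f q) / ln (n q) - a q) else 0)" for q
  have ln_le_iff: "ln (f q) / ln (n q) - a q \<le> e \<longleftrightarrow> f q \<le> n q powr (a q + e)"
    if "1 < n q" "0 < f q" for q e
  proof -
    have "ln (f q) / ln (n q) - a q \<le> e \<longleftrightarrow> ln (f q) \<le> ln (n q) * (a q + e)"
      using that by (simp add: divide_le_eq algebra_simps)
    also have "\<dots> \<longleftrightarrow> ln (f q) \<le> ln (n q powr (a q + e))"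
      using that by (simp add: ln_powr mult.commute)
    also have "\<dots> \<longleftrightarrow> f q \<le> n q powr (a q + e)" using that by (intro ln_le_cancel_iff) auto
    finally show ?thesis .
  qed
  have "(\<epsilon> \<longlongrightarrow> 0) at_top"
  proof (rule tendstoI)
    fix e :: real assume "e > 0"
    define \<eta> where "\<eta> = min e 1 / 2"
    have \<eta>: "0 < \<eta>" "\<eta> \<le> 1" "\<eta> < e" using \<open>e > 0\<close> by (auto simp: \<eta>_def)
    from bound[OF \<eta>(1,2)] n show "eventually (\<lambda>q. dist (\<epsilon> q) 0 < e) at_top"
    proof eventually_elim
      case (elim q)
      hence "\<epsilon> q \<le> \<eta>" using ln_le_iff[of q \<eta>] \<eta> by (auto simp: \<epsilon>_def)
      moreover have "\<epsilon> q \<ge> 0" by (simp add: \<epsilon>_def)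
      ultimately show ?case using \<eta> by simp
    qed
  qed
  moreover from n have "eventually (\<lambda>q. f q \<le> n q powr (a q + \<epsilon> q)) at_top"
  proof eventually_elim
    case (elim q)
    show ?case
    proof (cases "0 < f q")
      case True
      have "ln (f q) / ln (n q) - a q \<le> \<epsilon> q" using elim True by (simp add: \<epsilon>_def)
      thus ?thesis using ln_le_iff[OF elim True] by blast
    qed (auto intro: order_trans[OF _ powr_ge_zero])
  qed
  ultimately show ?thesis by blast
qed

lemma indep_subsets_minus_binomial_bigo:
  assumes k: "\<forall>q. k q > 0" "(\<lambda>q. real (k q)) \<in> o[at_top](\<lambda>q. sqrt (Log2 (real q)))"
  shows "\<exists>\<epsilon> :: nat \<Rightarrow> real. (\<epsilon> \<longlongrightarrow> 0) at_top \<and>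
    (\<lambda>q. real (card {S. S \<subseteq> {2..<q} \<and> card S = k q \<and> mult_indep S})
          - real (card {2..<q} choose k q))
      \<in> O[at_top](\<lambda>q. real (card {2..<q}) powr (real (k q) - 3/2 + \<epsilon> q))"
proof -
  have "eventually (\<lambda>q. 1 < real (q - 2)) at_top"
    using eventually_ge_at_top[of 4] by eventually_elim (simp add: of_nat_diff)
  then obtain \<epsilon> where \<epsilon>: "(\<epsilon> \<longlongrightarrow> 0) at_top"
    and le: "eventually (\<lambda>q. real (card (dependent_subsets q (k q)))
                                \<le> real (q - 2) powr (real (k q) - 3/2 + \<epsilon> q)) at_top"
    using exists_vanishing_exponent[OF eventually_card_dependent_subsets_le_card_powr[OF k]] by blast
  have "(\<lambda>q. real (card {S. S \<subseteq> {2..<q} \<and> card S = k q \<and> mult_indep S})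
          - real (card {2..<q} choose k q))
      \<in> O[at_top](\<lambda>q. real (card {2..<q}) powr (real (k q) - 3/2 + \<epsilon> q))"
  proof (rule bigoI[of _ 1])
    from le show "eventually (\<lambda>q. norm (real (card {S. S \<subseteq> {2..<q} \<and> card S = k q \<and> mult_indep S})
          - real (card {2..<q} choose k q))
        \<le> 1 * norm (real (card {2..<q}) powr (real (k q) - 3/2 + \<epsilon> q))) at_top"
    proof eventually_elim
      case (elim q)
      have "real (card {S. S \<subseteq> {2..<q} \<and> card S = k q \<and> mult_indep S})
              - real (card {2..<q} choose k q) = - real (card (dependent_subsets q (k q)))"
        using card_indep_plus_card_dependent_subsets[of q "k q"] by simp
      thus ?case using elim by simp
    qed
  qed
  with \<epsilon> show ?thesis by blast
qed

lemma binomial_diff_two_approx: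
  fixes q k :: nat and L :: real
  assumes k: "k \<ge> 1" and L: "L > 0" and kq: "real k + 2 \<le> real q" "(real k + 2) * L \<le> real q"
  shows "\<bar>real ((q - 2) choose k) - real q ^ k / fact k\<bar> \<le> real q ^ k / (fact (k - 1) * L)"
proof -
  define x where "x = real q"
  have x: "x > 0" "q \<ge> 2" using kq by (auto simp: x_def)
  have up: "real ((q - 2) choose k) * fact k \<le> x ^ k"
  proof -
    have "real ((q - 2) choose k) * fact k \<le> real (q - 2) ^ k"
      using binomial_fact_pow[of "q - 2" k] by (metis of_nat_fact of_nat_le_iff of_nat_mult of_nat_power)
    also have "\<dots> \<le> x ^ k" unfolding x_def by (intro power_mono) auto
    finally show ?thesis .
  qed
  have low: "x ^ k * (1 - real k * (real k + 2) / x) \<le> real ((q - 2) choose k) * fact k"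
  proof -
    have "x ^ k * (1 - real k * ((real k + 2) / x)) \<le> x ^ k * (1 - (real k + 2) / x) ^ k"
      using x kq Bernoulli_inequality[of "- ((real k + 2) / x)" k]
      by (intro mult_left_mono) (auto simp: x_def field_simps)
    also have "\<dots> = (x - 2 - real k) ^ k" using x by (simp add: power_mult_distrib[symmetric] field_simps)
    also have "\<dots> = (\<Prod>i = 0..<k. x - 2 - real k)" by simp
    also have "\<dots> \<le> (\<Prod>i = 0..<k. real (q - 2) - real i)"
      using kq x by (intro prod_mono) (auto simp: x_def of_nat_diff)
    also have "\<dots> = real ((q - 2) choose k) * fact k"
      by (simp add: binomial_gbinomial gbinomial_mult_fact')
    finally show ?thesis by (simp add: field_simps)
  qed
  have "x ^ k * (1 - real k * (real k + 2) / x) / fact k \<le> real ((q - 2) choose k)"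
    using low by (simp add: pos_divide_le_eq)
  hence "x ^ k / fact k - real ((q - 2) choose k)
           \<le> x ^ k / fact k - x ^ k * (1 - real k * (real k + 2) / x) / fact k" by linarith
  also have "\<dots> = x ^ k * (real k * (real k + 2) / x) / fact k" by (simp add: field_simps)
  also have "\<dots> = x ^ k * ((real k + 2) / x) / fact (k - 1)"
    using k x by (simp add: fact_reduce[of k] field_simps)
  also have "\<dots> \<le> x ^ k * (1 / L) / fact (k - 1)"
    using kq L x by (intro divide_right_mono mult_left_mono) (auto simp: field_simps x_def)
  finally have "x ^ k / fact k - real ((q - 2) choose k) \<le> x ^ k / (fact (k - 1) * L)"
    by (simp add: mult.commute)
  moreover have "real ((q - 2) choose k) \<le> x ^ k / fact k" using up by (simp add: field_simps)
  ultimately show ?thesis by (simp add: x_def abs_if)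
qed

lemma fact_pred_le_powr_self:
  fixes s :: real
  assumes "real k \<le> s" "s \<ge> 1"
  shows "fact (k - 1) \<le> s powr s"
proof -
  have "(fact (k - 1) :: real) \<le> fact k" by (intro fact_mono) auto
  also have "\<dots> \<le> real k ^ k" using fact_le_power[of k] by (metis of_nat_fact of_nat_le_iff of_nat_power)
  also have "\<dots> \<le> s ^ k" using assms by (intro power_mono) auto
  also have "\<dots> = s powr real k" using assms by (simp add: powr_realpow)
  also have "\<dots> \<le> s powr s" using assms by (intro powr_mono) auto
  finally show ?thesis .
qed

lemma card_indep_subsets_approx:
  fixes q k :: nat
  defines "ll \<equiv> ln (ln (real q))"
  assumes q: "q \<ge> 3" "ll \<ge> 2" and k: "k \<ge> 1" "real k \<le> sqrt ll"
    and large: "(sqrt ll + 2) * ll \<le> real q" "2 * (sqrt ll powr sqrt ll) * ll \<le> real q powr (7/8)"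
    and dep: "real (card (dependent_subsets q k)) \<le> 2 * real q powr (real k - 3/2 + 5/8)"
  shows "\<bar>real (card {S. S \<subseteq> {2..<q} \<and> card S = k \<and> mult_indep S}) - real q ^ k / fact k\<bar>
           \<le> 2 * (real q ^ k / (fact (k - 1) * ll))"
proof -
  define x where "x = real q"
  have x: "x > 1" using q by (simp add: x_def)
  have ll: "ll > 0" "sqrt ll \<ge> 1" using q by auto
  have "(real k + 2) * ll \<le> (sqrt ll + 2) * ll" using k ll by (intro mult_right_mono) auto
  hence kL: "(real k + 2) * ll \<le> x" using large(1) by (simp add: x_def)
  moreover have "real k + 2 \<le> (real k + 2) * ll" using q(2) mult_left_mono[of 1 ll "real k + 2"] by simp
  ultimately have kx: "real k + 2 \<le> x" by linarith
  have binom: "\<bar>real ((q - 2) choose k) - x ^ k / fact k\<bar> \<le> x ^ k / (fact (k - 1) * ll)"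
    using binomial_diff_two_approx[OF k(1) ll(1)] kx kL by (simp add: x_def)
  have "real (card (dependent_subsets q k)) * (fact (k - 1) * ll)
          \<le> (2 * x powr (real k - 7/8)) * (sqrt ll powr sqrt ll * ll)"
    using dep fact_pred_le_powr_self[OF k(2) ll(2)] ll by (intro mult_mono) (auto simp: x_def)
  also have "\<dots> = x powr (real k - 7/8) * (2 * (sqrt ll powr sqrt ll) * ll)" by (simp add: mult_ac)
  also have "\<dots> \<le> x powr (real k - 7/8) * x powr (7/8)"
    using large(2) by (intro mult_left_mono) (auto simp: x_def)
  also have "\<dots> = x ^ k" using x by (simp add: powr_add[symmetric] powr_realpow)
  finally have dep': "real (card (dependent_subsets q k)) \<le> x ^ k / (fact (k - 1) * ll)"
    using ll by (simp add: field_simps)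
  have "real (card {S. S \<subseteq> {2..<q} \<and> card S = k \<and> mult_indep S})
          = real ((q - 2) choose k) - real (card (dependent_subsets q k))"
    using card_indep_plus_card_dependent_subsets[of q k] by simp
  thus ?thesis using binom dep' by (simp add: x_def)
qed

lemma indep_subsets_minus_power_div_fact_bigo:
  assumes k: "\<forall>q. k q > 0" "(\<lambda>q. real (k q)) \<in> o[at_top](\<lambda>q. sqrt (Log2 (real q)))"
  shows "(\<lambda>q. real (card {S. S \<subseteq> {2..<q} \<and> card S = k q \<and> mult_indep S}) - real q ^ k q / fact (k q))
           \<in> O[at_top](\<lambda>q. real q ^ k q / (fact (k q - 1) * Log2 (real q)))"
proof (rule bigoI[of _ 2])
  have ev: "eventually (\<lambda>q::nat. 2 \<le> ln (real q)) at_top"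
    "eventually (\<lambda>q::nat. 2 \<le> ln (ln (real q))) at_top"
    "eventually (\<lambda>q::nat. (sqrt (ln (ln (real q))) + 2) * ln (ln (real q)) \<le> real q) at_top"
    "eventually (\<lambda>q::nat. 2 * (sqrt (ln (ln (real q))) powr sqrt (ln (ln (real q)))) * ln (ln (real q))
       \<le> real q powr (7/8)) at_top"
    by real_asymp+
  show "eventually (\<lambda>q. norm (real (card {S. S \<subseteq> {2..<q} \<and> card S = k q \<and> mult_indep S})
          - real q ^ k q / fact (k q)) \<le> 2 * norm (real q ^ k q / (fact (k q - 1) * Log2 (real q)))) at_top"
    using eventually_ge_at_top[of 3] eventually_card_dependent_subsets_le[OF k zero_less_one order_refl]
      eventually_le_mult_sqrt_loglog[OF k(2) zero_less_one] ev
  proof eventually_elim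
    case (elim q)
    have "Log2 (real q) = ln (ln (real q))" using elim by (simp add: Log2_def Log_def)
    moreover have "k q \<ge> 1" using k(1) by (simp add: Suc_le_eq)
    ultimately show ?case
      using card_indep_subsets_approx[of q "k q"] elim by (simp add: abs_of_nonneg)
  qed
qed

lemma card_atLeastLessThan_two_approx:
  "eventually (\<lambda>q. \<bar>real (card {2..<q}) - real q\<bar> \<le> 1/2 * real q / Log2 (real q)) at_top"
proof -
  have "eventually (\<lambda>q::nat. 2 \<le> ln (real q)) at_top"
    "eventually (\<lambda>q::nat. 2 \<le> ln (ln (real q))) at_top"
    "eventually (\<lambda>q::nat. 4 * ln (ln (real q)) \<le> real q) at_top"
    by real_asymp+
  with eventually_ge_at_top[of 2] show ?thesis
  proof eventually_elim
    case (elim q)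
    hence "Log2 (real q) = ln (ln (real q))" by (simp add: Log2_def Log_def)
    with elim show ?case by (simp add: of_nat_diff field_simps)
  qed
qed

theorem theorem1p3:
  shows "\<exists>N :: nat \<Rightarrow> nat set.
    (\<forall>q. N q \<subseteq> {2..<q}) \<and>
    (\<exists>C < 1. \<forall>\<^sub>F q in at_top.
        \<bar>real (card (N q)) - real q\<bar> \<le> C * real q / Log2 (real q)) \<and>
    (\<forall>k :: nat \<Rightarrow> nat.
       (\<forall>q. k q > 0) \<longrightarrow>
       (\<lambda>q. real (k q)) \<in> o[at_top](\<lambda>q. sqrt (Log2 (real q))) \<longrightarrow>
       (\<exists>\<epsilon> :: nat \<Rightarrow> real. (\<epsilon> \<longlongrightarrow> 0) at_top \<and>
          (\<lambda>q. real (card {S. S \<subseteq> N q \<and> card S = k q \<and> mult_indep S})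
                - real (card (N q) choose k q))
          \<in> O[at_top](\<lambda>q. real (card (N q)) powr (real (k q) - 3/2 + \<epsilon> q))) \<and>
       (\<lambda>q. real (card {S. S \<subseteq> N q \<and> card S = k q \<and> mult_indep S})
             - real q ^ k q / fact (k q))
          \<in> O[at_top](\<lambda>q. real q ^ k q / (fact (k q - 1) * Log2 (real q))))"
proof (intro exI[of _ "\<lambda>q. {2..<q}"] conjI allI impI)
  show "\<exists>C<1. \<forall>\<^sub>F q in at_top. \<bar>real (card {2..<q}) - real q\<bar> \<le> C * real q / Log2 (real q)"
    using card_atLeastLessThan_two_approx by (intro exI[of _ "1/2"]) auto
qed (blast intro: indep_subsets_minus_binomial_bigo indep_subsets_minus_power_div_fact_bigo)+

end
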